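(* Consider the system $\dot x=f(x)+Bw$, $z=Cx$ with the standing assumptions below, and a finite set of matrices $\mathcal A=\{A_1,\dots,A_k\}\subset\mathbb{R}^{n\times n}$ such that $\partial f(x)\in\operatorname{conv}\mathcal A$ for all $x\in\mathbb{R}^n$. Suppose $\eta_z,\eta_w\in\mathbb{R}$, $H\in\mathbb{R}^{m\times n}$, $P\in\mathbb{R}^{2n_z\times m}$, and $M_1,\dots,M_k\in\mathbb{R}^{m\times m}$ satisfy (i) $\eta_w>0$ and, for every $i\in\{1,\dots,k\}$: all off-diagonal entries of $M_i$ are nonnegative, $HA_i=M_iH$, and $-\eta_w\hat w_H=M_i\mathbf 1$, where $\hat w_H\in\mathbb{R}^m$ is the column vector with $j$-th entry $|B^T(H^j)^T|_1$, $H^j$ being the $j$-th row of $H$; (ii) $P\ge0$, $[C;\,-C]=PH$ (vertical stacking), $\eta_z\mathbf 1=P\mathbf 1$; and suppose $\mathcal H=\{x : Hx\le\mathbf 1\}$ is compact. Let $\mathcal X=\frac1{\eta_w}\mathcal H=\{x/\eta_w : Hx\le\mathbf 1\}$ and $\gamma_\infty=\eta_z/\eta_w$. Then for any two inputs $w_1,w_2$ with $\|w_1-w_2\|_\infty\le1$ and the corresponding solutions with $x_1(0)=x_2(0)=0$, one has $x_1(t)-x_2(t)\in\mathcal X$ for all $t\ge0$; and whenever $x_1(t)-x_2(t)\in\mathcal X$, $|z_1(t)-z_2(t)|_\infty\le\gamma_\infty$. Consequently the incremental $\mathcal L_\infty$ gain of the system is at most $\eta_z/\eta_w$, i.e. $\|z_1-z_2\|_\infty\le(\eta_z/\eta_w)\|w_1-w_2\|_\infty$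 for all inputs with $w_1-w_2\in\mathcal L_\infty$.
   Context: Standing assumptions: $f:\mathbb{R}^n\to\mathbb{R}^n$ is continuously differentiable with Jacobian $\partial f(x)$; $B\in\mathbb{R}^{n\times n_w}$, $C\in\mathbb{R}^{n_z\times n}$; every input signal $w$ yields a solution defined for all $t\ge0$ with $x(0)=0$, and $z=Cx$. $\operatorname{conv}\mathcal A=\{\sum_i\lambda_iA_i:\lambda_i\ge0,\sum_i\lambda_i=1\}$. $\mathbf 1$ is the all-ones vector; inequalities on matrices/vectors are entrywise. $|v|_1=\sum_i|v_i|$, $|v|_\infty=\max_i|v_i|$, $\|w\|_\infty=\sup_{t}|w(t)|_\infty$, and $w\in\mathcal L_\infty$ iff $\|w\|_\infty<\infty$. *)

theory Defs
  imports "HOL-Analysis.Analysis"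
begin

definition vnorm1 :: "real^'n \<Rightarrow> real" where
  "vnorm1 v = (\<Sum>i\<in>UNIV. \<bar>v $ i\<bar>)"

definition vnorm_inf :: "real^'n \<Rightarrow> real" where
  "vnorm_inf v = Max (range (\<lambda>i. \<bar>v $ i\<bar>))"

definition sig_norm_inf :: "(real \<Rightarrow> real^'n) \<Rightarrow> real" where
  "sig_norm_inf w = (SUP t\<in>{0..}. vnorm_inf (w t))"

definition in_Linf :: "(real \<Rightarrow> real^'n) \<Rightarrow> bool" where
  "in_Linf w \<longleftrightarrow> bdd_above ((\<lambda>t. vnorm_inf (w t)) ` {0..})"

definition is_solution ::
  "(real^'n \<Rightarrow> real^'n) \<Rightarrow> real^'w^'n \<Rightarrow> (real \<Rightarrow> real^'w) \<Rightarrow> (real \<Rightarrow> real^'n) \<Rightarrow> bool" where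
  "is_solution f B w x \<longleftrightarrow> x 0 = 0 \<and>
     (\<forall>t\<ge>0. ((\<lambda>s. f (x s) + B *v w s) has_integral x t) {0..t})"

definition what :: "real^'n^'m \<Rightarrow> real^'w^'n \<Rightarrow> real^'m" where
  "what H B = (\<chi> j. vnorm1 (transpose B *v (H $ j)))"

definition stackneg :: "real^'n^'z \<Rightarrow> real^'n^('z + 'z)" where
  "stackneg C = (\<chi> i. case i of Inl j \<Rightarrow> C $ j | Inr j \<Rightarrow> - (C $ j))"

definition polyH :: "real^'n^'m \<Rightarrow> (real^'n) set" where
  "polyH H = {x. \<forall>j. (H *v x) $ j \<le> 1}"

end

theory Submission
  imports Defs
begin

(* Let gamma bound |w1 - w2|_inf, put rho = gamma / eta_w and y = H (x1 - x2). By the mean value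
   theorem and the convex-hull hypothesis, (H (f x1 - f x2))_j = (N y)_j for some matrix N in the
   convex hull of the M_i, which is again Metzler with N 1 = - eta_w what. Together with
   (H B delta)_j <= what_j |delta|_inf this gives y_j' <= (N (y - rho 1))_j, and since only the
   diagonal entry of a Metzler row can be negative, this is at most a multiple of the excess of y
   over rho while y_j >= rho. Hence y can never leave the box y <= rho, i.e.
   x1 - x2 stays in (gamma / eta_w) {x. H x <= 1}; the output bound follows from [C; -C] = P H
   with P >= 0 and P 1 = eta_z 1. Neither the continuity of the Jacobian nor the compactness of
   {x. H x <= 1} is needed. *)

definition metzler :: "real^'m^'m \<Rightarrow> bool" where
  "metzler N \<longleftrightarrow> (\<forall>a b. a \<noteq> b \<longrightarrow> 0 \<le> N $ a $ b)"

definition bounded_metzler :: "real \<Rightarrow> real^'m \<Rightarrow> (real^'m^'m) set" where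
  "bounded_metzler K r = {N. metzler N \<and> (\<forall>a b. \<bar>N $ a $ b\<bar> \<le> K) \<and> N *v vec 1 = r}"

lemma convex_bounded_metzler:
  fixes r :: "real^'m"
  shows "convex (bounded_metzler K r)"
proof (rule convexI)
  fix N1 N2 :: "real^'m^'m" and u v :: real
  assume N: "N1 \<in> bounded_metzler K r" "N2 \<in> bounded_metzler K r"
    and uv: "0 \<le> u" "0 \<le> v" "u + v = 1"
  have "\<bar>u * N1 $ a $ b + v * N2 $ a $ b\<bar> \<le> K" for a b
  proof -
    have "\<bar>u * N1 $ a $ b + v * N2 $ a $ b\<bar> \<le> u * \<bar>N1 $ a $ b\<bar> + v * \<bar>N2 $ a $ b\<bar>"
      using uv by (metis abs_mult abs_of_nonneg abs_triangle_ineq)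
    also have "\<dots> \<le> K"
      using N uv by (intro convex_bound_le) (auto simp: bounded_metzler_def)
    finally show ?thesis .
  qed
  moreover have "(u *\<^sub>R N1 + v *\<^sub>R N2) *v vec 1 = (u + v) *\<^sub>R r"
    using N by (simp add: bounded_metzler_def matrix_vector_mult_add_rdistrib
        scaleR_add_left flip: scaleR_matrix_vector_assoc)
  ultimately show "u *\<^sub>R N1 + v *\<^sub>R N2 \<in> bounded_metzler K r"
    using N uv by (auto simp: bounded_metzler_def metzler_def)
qed

lemma intertwined_convex_hull:
  fixes H :: "real^'n^'m" and A :: "'k \<Rightarrow> real^'n^'n"
  assumes "convex \<N>" and "\<And>i. M i \<in> \<N>" and "\<And>i. H ** A i = M i ** H"
    and "D \<in> convex hull (range A)"
  shows "\<exists>N\<in>\<N>. H ** D = N ** H"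
proof -
  have "convex {D. \<exists>N\<in>\<N>. H ** D = N ** H}"
  proof (rule convexI)
    fix D1 D2 and u v :: real
    assume "D1 \<in> {D. \<exists>N\<in>\<N>. H ** D = N ** H}" "D2 \<in> {D. \<exists>N\<in>\<N>. H ** D = N ** H}"
      and uv: "0 \<le> u" "0 \<le> v" "u + v = 1"
    then obtain N1 N2 where N: "N1 \<in> \<N>" "H ** D1 = N1 ** H" "N2 \<in> \<N>" "H ** D2 = N2 ** H"
      by blast
    have "H ** (u *\<^sub>R D1 + v *\<^sub>R D2) = u *\<^sub>R (N1 ** H) + v *\<^sub>R (N2 ** H)"
      using N(2,4) by (simp add: matrix_add_ldistrib matrix_scalar_ac flip: scalar_matrix_assoc)
    also have "\<dots> = (u *\<^sub>R N1 + v *\<^sub>R N2) ** H"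
      by (vector matrix_matrix_mult_def sum.distrib sum_distrib_left field_simps)
    finally have "H ** (u *\<^sub>R D1 + v *\<^sub>R D2) = (u *\<^sub>R N1 + v *\<^sub>R N2) ** H" .
    moreover have "u *\<^sub>R N1 + v *\<^sub>R N2 \<in> \<N>"
      using assms(1) N(1,3) uv by (rule convexD)
    ultimately show "u *\<^sub>R D1 + v *\<^sub>R D2 \<in> {D. \<exists>N\<in>\<N>. H ** D = N ** H}" by blast
  qed
  moreover have "range A \<subseteq> {D. \<exists>N\<in>\<N>. H ** D = N ** H}"
    using assms(2,3) by blast
  ultimately show ?thesis
    using assms(4) hull_minimal by blast
qed

lemma metzler_row_le:
  fixes N :: "real^'m^'m" and K E :: real
  assumes "metzler N" and "\<And>a b. \<bar>N $ a $ b\<bar> \<le> K"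
    and "0 \<le> z $ j" and "\<And>k. z $ k \<le> E"
  shows "(N *v z) $ j \<le> real CARD('m) * K * E"
proof -
  have "N $ j $ k * z $ k \<le> K * E" for k
  proof (cases "k = j")
    case True
    have "N $ j $ k * z $ k \<le> \<bar>N $ j $ k\<bar> * z $ k"
      using True assms(3) by (intro mult_right_mono) auto
    also have "\<dots> \<le> K * E"
      using True assms by (intro mult_mono) (auto intro: order_trans[OF abs_ge_zero])
    finally show ?thesis .
  next
    case False
    then have "0 \<le> N $ j $ k"
      using assms(1) by (simp add: metzler_def)
    moreover have "0 \<le> E"
      using assms(3,4) order_trans by blast
    ultimately show ?thesis
      using assms(2)[of j k] assms(4)[of k]
      by (intro order_trans[OF mult_left_mono mult_right_mono]) auto
  qed
  then have "(\<Sum>k\<in>UNIV. N $ j $ k * z $ k) \<le> (\<Sum>k\<in>(UNIV::'m set). K * E)"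
    by (rule sum_mono)
  then show ?thesis
    by (simp add: matrix_vector_mult_def)
qed

lemma mean_value_intertwined:
  fixes f :: "real^'n \<Rightarrow> real^'n" and H :: "real^'n^'m"
  assumes f_deriv: "\<And>x. (f has_derivative (\<lambda>h. Df x *v h)) (at x)"
    and intertwined: "\<And>x. \<exists>N\<in>\<N>. H ** Df x = N ** H"
  shows "\<exists>N\<in>\<N>. (H *v (f a - f b)) $ j = (N *v (H *v (a - b))) $ j"
proof -
  define \<phi> where "\<phi> u = (H *v f (b + u *\<^sub>R (a - b))) $ j" for u :: real
  have "((\<lambda>u. b + u *\<^sub>R (a - b)) has_derivative (\<lambda>h. h *\<^sub>R (a - b))) (at u within {0..1})" for u
    by (auto intro!: derivative_eq_intros)
  from has_derivative_compose[OF this f_deriv]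
  have "(\<phi> has_derivative (\<lambda>h. (H *v (Df (b + u *\<^sub>R (a - b)) *v (h *\<^sub>R (a - b)))) $ j))
      (at u within {0..1})" for u
    unfolding \<phi>_def
    by (rule bounded_linear.has_derivative[rotated])
      (intro bounded_linear_compose[OF bounded_linear_vec_nth] matrix_vector_mul_bounded_linear)
  from mvt_simple[of 0 1 \<phi>, OF _ this]
  obtain \<xi> where "\<phi> 1 - \<phi> 0 = (H *v (Df (b + \<xi> *\<^sub>R (a - b)) *v (a - b))) $ j"
    by auto
  moreover obtain N where "N \<in> \<N>" "H ** Df (b + \<xi> *\<^sub>R (a - b)) = N ** H"
    using intertwined by blast
  ultimately show ?thesis
    by (auto simp: \<phi>_def matrix_vector_mul_assoc matrix_vector_mult_diff_distrib)
qed

lemma what_nonneg: "0 \<le> what H B $ j"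
  by (simp add: what_def vnorm1_def sum_nonneg)

lemma component_H_B_le_what:
  fixes H :: "real^'n^'m" and B :: "real^'w^'n"
  shows "(H *v (B *v \<delta>)) $ j \<le> what H B $ j * vnorm_inf \<delta>"
proof -
  have "(H *v (B *v \<delta>)) $ j = (\<Sum>l\<in>UNIV. (transpose B *v H $ j) $ l * \<delta> $ l)"
    unfolding matrix_vector_mult_def transpose_def
    by (simp add: sum_distrib_left sum_distrib_right mult_ac) (rule sum.swap)
  also have "\<dots> \<le> (\<Sum>l\<in>UNIV. \<bar>(transpose B *v H $ j) $ l\<bar> * vnorm_inf \<delta>)"
  proof (rule sum_mono)
    fix l
    have "(transpose B *v H $ j) $ l * \<delta> $ l \<le> \<bar>(transpose B *v H $ j) $ l\<bar> * \<bar>\<delta> $ l\<bar>"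
      by (metis abs_ge_self abs_mult)
    also have "\<dots> \<le> \<bar>(transpose B *v H $ j) $ l\<bar> * vnorm_inf \<delta>"
      unfolding vnorm_inf_def by (intro mult_left_mono Max_ge) auto
    finally show "(transpose B *v H $ j) $ l * \<delta> $ l \<le> \<bar>(transpose B *v H $ j) $ l\<bar> * vnorm_inf \<delta>" .
  qed
  also have "\<dots> = what H B $ j * vnorm_inf \<delta>"
    by (simp add: what_def vnorm1_def sum_distrib_right)
  finally show ?thesis .
qed

lemma drift_component_le:
  fixes f :: "real^'n \<Rightarrow> real^'n" and H :: "real^'n^'m" and B :: "real^'w^'n"
  assumes f_deriv: "\<And>x. (f has_derivative (\<lambda>h. Df x *v h)) (at x)"
    and intertwined: "\<And>x. \<exists>N\<in>bounded_metzler K (- \<eta> *\<^sub>R what H B). H ** Df x = N ** H"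
    and \<delta>: "vnorm_inf \<delta> \<le> \<eta> * \<rho>"
    and on_face: "\<rho> \<le> (H *v (a - b)) $ j"
    and excess: "\<And>k. (H *v (a - b)) $ k - \<rho> \<le> E"
  shows "(H *v (f a - f b + B *v \<delta>)) $ j \<le> real CARD('m) * K * E"
proof -
  obtain N where N: "N \<in> bounded_metzler K (- \<eta> *\<^sub>R what H B)"
    and mvt: "(H *v (f a - f b)) $ j = (N *v (H *v (a - b))) $ j"
    using mean_value_intertwined[OF f_deriv intertwined] by blast
  have "(H *v (B *v \<delta>)) $ j \<le> what H B $ j * (\<eta> * \<rho>)"
    using component_H_B_le_what \<delta> what_nonneg by (rule order_trans[OF _ mult_left_mono])
  also have "\<dots> = - (N *v (\<rho> *\<^sub>R vec 1)) $ j"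
    using N by (simp add: bounded_metzler_def matrix_vector_mult_scaleR)
  finally have "(H *v (f a - f b + B *v \<delta>)) $ j
      \<le> (N *v (H *v (a - b))) $ j - (N *v (\<rho> *\<^sub>R vec 1)) $ j"
    using mvt by (simp add: matrix_vector_right_distrib)
  also have "\<dots> = (N *v (H *v (a - b) - \<rho> *\<^sub>R vec 1)) $ j"
    by (simp add: matrix_vector_mult_diff_distrib)
  also have "\<dots> \<le> real CARD('m) * K * E"
    using N on_face excess by (intro metzler_row_le) (auto simp: bounded_metzler_def)
  finally show ?thesis .
qed

lemma first_exit_time:
  fixes y :: "real \<Rightarrow> 'a::topological_space"
  assumes cont: "\<And>T. continuous_on {0..T} y" and "closed S"
    and "y 0 \<in> S" and "0 \<le> t" and "y t \<notin> S"
  obtains \<tau> where "0 \<le> \<tau>" and "\<And>r. r \<in> {0..\<tau>} \<Longrightarrow> y r \<in> S"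
    and "\<And>h. 0 < h \<Longrightarrow> \<exists>u\<in>{\<tau><..<\<tau> + h}. y u \<notin> S"
proof
  define U where "U = {u. 0 \<le> u \<and> y u \<notin> S}"
  have "t \<in> U" and bdd: "bdd_below U"
    using assms(4,5) by (auto simp: U_def intro: bdd_belowI[of _ 0])
  then have U_ne: "U \<noteq> {}" by auto
  show "0 \<le> Inf U"
    using U_ne by (intro cInf_greatest) (auto simp: U_def)
  have before: "y r \<in> S" if "0 \<le> r" "r < Inf U" for r
    using that cInf_lower[OF _ bdd, of r] by (force simp: U_def)
  have at: "y (Inf U) \<in> S"
  proof (cases "Inf U = 0")
    case True
    with assms(3) show ?thesis by simp
  next
    case False
    with \<open>0 \<le> Inf U\<close> have "closure {0..<Inf U} = {0..Inf U}" by simp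
    moreover have "closed ({0..Inf U} \<inter> y -` S)"
      using cont assms(2) by (intro continuous_closed_preimage) auto
    moreover have "{0..<Inf U} \<subseteq> {0..Inf U} \<inter> y -` S"
      using before by auto
    ultimately have "{0..Inf U} \<subseteq> y -` S"
      by (metis closure_minimal inf.bounded_iff)
    then show ?thesis
      using \<open>0 \<le> Inf U\<close> by auto
  qed
  show "y r \<in> S" if "r \<in> {0..Inf U}" for r
    using that before at by (cases "r = Inf U") auto
  show "\<exists>u\<in>{Inf U<..<Inf U + h}. y u \<notin> S" if "0 < h" for h
  proof -
    obtain u where "u \<in> U" "u < Inf U + h"
      using cInf_lessD[OF U_ne, of "Inf U + h"] \<open>0 < h\<close> by auto
    moreover have "Inf U \<le> u"
      using \<open>u \<in> U\<close> bdd by (rule cInf_lower)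
    ultimately show ?thesis
      using at by (auto simp: U_def order.order_iff_strict)
  qed
qed

lemma last_level_crossing:
  fixes g :: "real \<Rightarrow> real"
  assumes cont: "continuous_on {a..t} g" and "a \<le> t" and "g a \<le> \<rho>" and "\<rho> \<le> g t"
  obtains s where "s \<in> {a..t}" and "g s = \<rho>" and "\<And>r. r \<in> {s..t} \<Longrightarrow> \<rho> \<le> g r"
proof -
  define S where "S = {a..t} \<inter> g -` {..\<rho>}"
  have "closed S"
    unfolding S_def using cont by (intro continuous_closed_preimage) auto
  moreover have "a \<in> S" and bdd: "bdd_above S"
    using assms(2,3) by (auto simp: S_def intro: bdd_aboveI[of _ t])
  ultimately have "Sup S \<in> S"
    by (intro closed_contains_Sup) auto
  then have s: "Sup S \<in> {a..t}" "g (Sup S) \<le> \<rho>"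
    by (auto simp: S_def)
  have above: "\<rho> < g r" if "r \<in> {Sup S<..t}" for r
    using that cSup_upper[OF _ bdd, of r] s by (force simp: S_def)
  obtain s' where s': "Sup S \<le> s'" "s' \<le> t" "g s' = \<rho>"
    using IVT'[of g "Sup S" \<rho> t] s assms(4) continuous_on_subset[OF cont] by auto
  then have "s' = Sup S"
    using cSup_upper[OF _ bdd, of s'] s by (force simp: S_def)
  with s s' above show thesis
    by (intro that[of "Sup S"]) (auto simp: order.order_iff_strict)
qed

lemma growth_above_level_le:
  fixes g :: "real \<Rightarrow> real"
  assumes cont: "continuous_on {a..t} g" and "a \<le> t" and "g a \<le> \<rho>" and "0 \<le> c"
    and growth: "\<And>s. a \<le> s \<Longrightarrow> s \<le> t \<Longrightarrow> (\<And>r. r \<in> {s..t} \<Longrightarrow> \<rho> \<le> g r) \<Longrightarrow>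
        g t - g s \<le> c * (t - s)"
  shows "g t - \<rho> \<le> c * (t - a)"
proof (cases "g t \<le> \<rho>")
  case True
  moreover have "0 \<le> c * (t - a)"
    using assms(2,4) by simp
  ultimately show ?thesis by linarith
next
  case False
  then have "\<rho> \<le> g t" by simp
  then obtain s where s: "s \<in> {a..t}" "g s = \<rho>" "\<And>r. r \<in> {s..t} \<Longrightarrow> \<rho> \<le> g r"
    using last_level_crossing[OF cont assms(2,3)] by blast
  then have "g t - \<rho> \<le> c * (t - s)"
    using growth[of s] by simp
  also have "\<dots> \<le> c * (t - a)"
    using s(1) assms(4) by (intro mult_left_mono) auto
  finally show ?thesis .
qed

lemma least_excess_bound:
  fixes y :: "real \<Rightarrow> real^'m"
  assumes "continuous_on I y" and "compact I" and "I \<noteq> {}"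
  obtains E where "0 \<le> E" and "\<And>r k. r \<in> I \<Longrightarrow> y r $ k - \<rho> \<le> E"
    and "\<And>c. 0 \<le> c \<Longrightarrow> (\<And>r k. r \<in> I \<Longrightarrow> y r $ k - \<rho> \<le> c) \<Longrightarrow> E \<le> c"
proof
  have "compact (y ` I)"
    using assms(1,2) by (rule compact_continuous_image)
  then obtain b where b: "\<And>r. r \<in> I \<Longrightarrow> norm (y r) \<le> b"
    by (meson bounded_iff compact_imp_bounded imageI)
  define E where "E = (SUP (r, k)\<in>I \<times> UNIV. max 0 (y r $ k - \<rho>))"
  have bdd: "bdd_above ((\<lambda>(r, k). max 0 (y r $ k - \<rho>)) ` (I \<times> UNIV))"
  proof (rule bdd_aboveI2)
    fix rk :: "real \<times> 'm" assume "rk \<in> I \<times> UNIV"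
    then obtain r k where "rk = (r, k)" "r \<in> I" by auto
    moreover have "y r $ k \<le> b"
      using b[OF \<open>r \<in> I\<close>] component_le_norm_cart[of "y r" k] by linarith
    ultimately show "(case rk of (r, k) \<Rightarrow> max 0 (y r $ k - \<rho>)) \<le> max 0 (b - \<rho>)"
      by auto
  qed
  have upper: "max 0 (y r $ k - \<rho>) \<le> E" if "r \<in> I" for r k
    using cSUP_upper[OF _ bdd, of "(r, k)"] that by (simp add: E_def)
  then show "y r $ k - \<rho> \<le> E" if "r \<in> I" for r k
    using that by fastforce
  show "0 \<le> E"
    using upper assms(3) by fastforce
  show "E \<le> c" if "0 \<le> c" and "\<And>r k. r \<in> I \<Longrightarrow> y r $ k - \<rho> \<le> c" for c
    unfolding E_def using that assms(3) by (intro cSUP_least) auto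
qed

lemma componentwise_barrier:
  fixes y :: "real \<Rightarrow> real^'m"
  assumes cont: "\<And>T. continuous_on {0..T} y"
    and init: "\<And>j. y 0 $ j \<le> \<rho>" and "0 \<le> L"
    and growth: "\<And>s t j E. 0 \<le> s \<Longrightarrow> s \<le> t \<Longrightarrow> (\<And>r. r \<in> {s..t} \<Longrightarrow> \<rho> \<le> y r $ j) \<Longrightarrow>
        (\<And>r k. r \<in> {s..t} \<Longrightarrow> y r $ k - \<rho> \<le> E) \<Longrightarrow> y t $ j - y s $ j \<le> L * E * (t - s)"
    and "0 \<le> t"
  shows "y t $ j \<le> \<rho>"
proof (rule ccontr)
  define S where "S = {v :: real^'m. \<forall>k. v $ k \<le> \<rho>}"
  assume "\<not> y t $ j \<le> \<rho>"
  then have "y t \<notin> S" by (auto simp: S_def)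
  moreover have "y 0 \<in> S"
    using init by (simp add: S_def)
  moreover have "closed S"
    unfolding S_def by (intro closed_Collect_all closed_Collect_le continuous_intros)
  ultimately obtain \<tau> where "0 \<le> \<tau>" and stay: "\<And>r. r \<in> {0..\<tau>} \<Longrightarrow> y r \<in> S"
    and leave: "\<And>h. 0 < h \<Longrightarrow> \<exists>u\<in>{\<tau><..<\<tau> + h}. y u \<notin> S"
    using first_exit_time[OF cont _ _ \<open>0 \<le> t\<close>] by blast
  \<comment> \<open>Over [tau, tau + h] the excess E grows at rate at most L E, so E \<le> L h E \<le> E / 2.\<close>
  define h where "h = 1 / (2 * L + 2)"
  have "0 < h" and Lh: "L * h \<le> 1 / 2"
    using \<open>0 \<le> L\<close> by (auto simp: h_def field_simps)
  define I where "I = {\<tau>..\<tau> + h}"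
  have "continuous_on I y"
    unfolding I_def by (rule continuous_on_subset[OF cont[of "\<tau> + h"]]) (use \<open>0 \<le> \<tau>\<close> in auto)
  then obtain E where "0 \<le> E" and excess: "\<And>r k. r \<in> I \<Longrightarrow> y r $ k - \<rho> \<le> E"
    and least: "\<And>c. 0 \<le> c \<Longrightarrow> (\<And>r k. r \<in> I \<Longrightarrow> y r $ k - \<rho> \<le> c) \<Longrightarrow> E \<le> c"
    using least_excess_bound[of I y \<rho>] \<open>0 < h\<close> by (auto simp: I_def)
  have "y r $ k - \<rho> \<le> L * E * (r - \<tau>)" if "r \<in> I" for r k
  proof (rule growth_above_level_le)
    show "continuous_on {\<tau>..r} (\<lambda>r. y r $ k)"
      using that \<open>0 \<le> \<tau>\<close>
      by (intro continuous_on_component continuous_on_subset[OF cont]) (auto simp: I_def)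
    show "y \<tau> $ k \<le> \<rho>"
      using stay[of \<tau>] \<open>0 \<le> \<tau>\<close> by (auto simp: S_def)
    show "y r $ k - y s $ k \<le> L * E * (r - s)"
      if "\<tau> \<le> s" "s \<le> r" "\<And>r'. r' \<in> {s..r} \<Longrightarrow> \<rho> \<le> y r' $ k" for s
      using that \<open>r \<in> I\<close> \<open>0 \<le> \<tau>\<close> by (intro growth excess) (auto simp: I_def)
  qed (use that \<open>0 \<le> L\<close> \<open>0 \<le> E\<close> in \<open>auto simp: I_def\<close>)
  also have "L * E * (r - \<tau>) \<le> L * E * h" if "r \<in> I" for r
    using that \<open>0 \<le> L\<close> \<open>0 \<le> E\<close> by (intro mult_left_mono) (auto simp: I_def)
  finally have "E \<le> L * E * h"
    using \<open>0 \<le> L\<close> \<open>0 \<le> E\<close> \<open>0 < h\<close> by (intro least) auto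
  also have "\<dots> \<le> E / 2"
    using mult_left_mono[OF Lh \<open>0 \<le> E\<close>] by (simp add: mult.commute mult.left_commute)
  finally have "E \<le> 0" by simp
  obtain u where "u \<in> {\<tau><..<\<tau> + h}" "y u \<notin> S"
    using leave[OF \<open>0 < h\<close>] by blast
  then obtain k where "u \<in> I" "\<rho> < y u $ k"
    by (auto simp: S_def I_def not_le)
  with excess[of u k] \<open>E \<le> 0\<close> show False
    by linarith
qed

lemma is_solution_continuous:
  assumes "is_solution f B w x"
  shows "continuous_on {0..T} x"
proof (cases "0 \<le> T")
  case True
  have "continuous_on {0..T} (\<lambda>t. integral {0..t} (\<lambda>s. f (x s) + B *v w s))"
    using assms True by (intro indefinite_integral_continuous_1) (auto simp: is_solution_def)
  then show ?thesis
    by (rule continuous_on_eq) (use assms in \<open>auto simp: is_solution_def integral_unique\<close>)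
qed simp

lemma is_solution_increment:
  assumes "is_solution f B w x" and "0 \<le> s" and "s \<le> t"
  shows "((\<lambda>r. f (x r) + B *v w r) has_integral x t - x s) {s..t}"
proof -
  let ?g = "\<lambda>r. f (x r) + B *v w r"
  have x: "(?g has_integral x r) {0..r}" if "0 \<le> r" for r
    using assms(1) that by (simp add: is_solution_def)
  have "0 \<le> t"
    using assms(2,3) by simp
  have "?g integrable_on {s..t}"
    using has_integral_integrable[OF x[OF \<open>0 \<le> t\<close>]]
    by (rule integrable_on_subinterval) (use assms(2) in auto)
  then obtain J where J: "(?g has_integral J) {s..t}"
    by (auto simp: integrable_on_def)
  have "(?g has_integral x s + J) {0..t}"
    using has_integral_combine[OF assms(2,3) x[OF assms(2)] J] .
  then have "x t = x s + J"
    using x[OF \<open>0 \<le> t\<close>] by (rule has_integral_unique[rotated])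
  with J show ?thesis
    by simp
qed

lemma solution_difference_increment:
  assumes "is_solution f B w1 x1" and "is_solution f B w2 x2" and "0 \<le> s" and "s \<le> t"
  shows "((\<lambda>r. f (x1 r) - f (x2 r) + B *v (w1 r - w2 r)) has_integral
      (x1 t - x2 t) - (x1 s - x2 s)) {s..t}"
  using has_integral_diff[OF is_solution_increment[OF assms(1,3,4)]
      is_solution_increment[OF assms(2,3,4)]]
  by (simp add: algebra_simps)

lemma solution_difference_component_le:
  fixes f :: "real^'n \<Rightarrow> real^'n" and H :: "real^'n^'m" and B :: "real^'w^'n"
  assumes f_deriv: "\<And>x. (f has_derivative (\<lambda>h. Df x *v h)) (at x)"
    and intertwined: "\<And>x. \<exists>N\<in>bounded_metzler K (- \<eta> *\<^sub>R what H B). H ** Df x = N ** H"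
    and sol1: "is_solution f B w1 x1" and sol2: "is_solution f B w2 x2"
    and input: "\<And>t. 0 \<le> t \<Longrightarrow> vnorm_inf (w1 t - w2 t) \<le> \<eta> * \<rho>"
    and "0 \<le> \<rho>" and "0 \<le> t"
  shows "(H *v (x1 t - x2 t)) $ j \<le> \<rho>"
proof -
  define y where "y t = H *v (x1 t - x2 t)" for t
  have "0 \<le> K"
    using intertwined[of 0] by (auto simp: bounded_metzler_def intro: order_trans[OF abs_ge_zero])
  have "y t $ j \<le> \<rho>"
  proof (rule componentwise_barrier)
    show "continuous_on {0..T} y" for T
      unfolding y_def using sol1 sol2
      by (intro linear_continuous_on_compose[OF _ matrix_vector_mul_linear]
          continuous_on_diff is_solution_continuous)
    show "y 0 $ k \<le> \<rho>" for k
      using sol1 sol2 \<open>0 \<le> \<rho>\<close> by (simp add: y_def is_solution_def)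
    show "0 \<le> real CARD('m) * K"
      using \<open>0 \<le> K\<close> by simp
    show "y t $ k - y s $ k \<le> real CARD('m) * K * E * (t - s)"
      if "0 \<le> s" "s \<le> t" and on_face: "\<And>r. r \<in> {s..t} \<Longrightarrow> \<rho> \<le> y r $ k"
        and excess: "\<And>r k'. r \<in> {s..t} \<Longrightarrow> y r $ k' - \<rho> \<le> E" for s t k E
    proof (rule has_integral_le)
      let ?drift = "\<lambda>r. f (x1 r) - f (x2 r) + B *v (w1 r - w2 r)"
      from has_integral_linear[OF solution_difference_increment[OF sol1 sol2 that(1,2)]
          bounded_linear_compose[OF bounded_linear_vec_nth[of k] matrix_vector_mul_bounded_linear[of H]]]
      show "((\<lambda>r. (H *v ?drift r) $ k) has_integral y t $ k - y s $ k) {s..t}"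
        by (simp add: o_def y_def matrix_vector_mult_diff_distrib)
      show "((\<lambda>r. real CARD('m) * K * E) has_integral real CARD('m) * K * E * (t - s)) {s..t}"
        using has_integral_const_real[of "real CARD('m) * K * E" s t] that(2) by (simp add: mult.commute)
      show "(H *v ?drift r) $ k \<le> real CARD('m) * K * E" if "r \<in> {s..t}" for r
        using that \<open>0 \<le> s\<close> on_face excess
        by (intro drift_component_le[OF f_deriv intertwined, where \<rho> = \<rho>] input)
          (auto simp: y_def)
    qed
  qed fact
  then show ?thesis
    by (simp add: y_def)
qed

lemma vnorm_inf_le_iff: "vnorm_inf v \<le> c \<longleftrightarrow> (\<forall>i. \<bar>v $ i\<bar> \<le> c)"
  unfolding vnorm_inf_def by (subst Max_le_iff) auto

lemma vnorm_inf_nonneg: "0 \<le> vnorm_inf v"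
  unfolding vnorm_inf_def by (rule order_trans[OF abs_ge_zero Max_ge]) auto

lemma vnorm_inf_le_sig_norm_inf:
  assumes "in_Linf w" and "0 \<le> t"
  shows "vnorm_inf (w t) \<le> sig_norm_inf w"
  using assms unfolding in_Linf_def sig_norm_inf_def by (intro cSUP_upper) auto

lemma sig_norm_inf_leI:
  assumes "\<And>t. 0 \<le> t \<Longrightarrow> vnorm_inf (z t) \<le> c"
  shows "in_Linf z" and "sig_norm_inf z \<le> c"
  using assms unfolding in_Linf_def sig_norm_inf_def
  by (intro bdd_aboveI2[where M = c] cSUP_least; simp)+

lemma mem_scaled_polyH_iff:
  fixes H :: "real^'n^'m"
  assumes "0 < \<eta>"
  shows "x \<in> (\<lambda>x. x /\<^sub>R \<eta>) ` polyH H \<longleftrightarrow> (\<forall>j. (H *v x) $ j \<le> 1 / \<eta>)"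
proof -
  have "x \<in> (\<lambda>x. x /\<^sub>R \<eta>) ` polyH H \<longleftrightarrow> \<eta> *\<^sub>R x \<in> polyH H"
    using assms by (auto intro: rev_image_eqI[of "\<eta> *\<^sub>R x"])
  also have "\<dots> \<longleftrightarrow> (\<forall>j. (H *v x) $ j \<le> 1 / \<eta>)"
    using assms by (simp add: polyH_def matrix_vector_mult_scaleR pos_le_divide_eq mult.commute)
  finally show ?thesis .
qed

lemma vnorm_inf_output_le:
  fixes C :: "real^'n^'z" and H :: "real^'n^'m" and P :: "real^'m^('z + 'z)"
  assumes P_nonneg: "\<And>a b. 0 \<le> P $ a $ b" and CPH: "stackneg C = P ** H"
    and P_one: "\<eta> *\<^sub>R vec 1 = P *v vec 1" and d: "\<And>j. (H *v d) $ j \<le> \<rho>"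
  shows "vnorm_inf (C *v d) \<le> \<eta> * \<rho>"
proof -
  have stacked: "(stackneg C *v d) $ i \<le> \<eta> * \<rho>" for i
  proof -
    have "(stackneg C *v d) $ i = (P *v (H *v d)) $ i"
      by (simp add: CPH matrix_vector_mul_assoc)
    also have "\<dots> = (\<Sum>k\<in>UNIV. P $ i $ k * (H *v d) $ k)"
      by (simp add: matrix_vector_mult_def)
    also have "\<dots> \<le> (\<Sum>k\<in>UNIV. P $ i $ k * \<rho>)"
      by (intro sum_mono mult_left_mono d P_nonneg)
    also have "\<dots> = (P *v vec 1) $ i * \<rho>"
      by (simp add: matrix_vector_mult_def sum_distrib_right)
    also have "\<dots> = \<eta> * \<rho>"
      unfolding P_one[symmetric] by simp
    finally show ?thesis .
  qed
  have "(stackneg C *v d) $ Inl j = (C *v d) $ j" and "(stackneg C *v d) $ Inr j = - (C *v d) $ j" for j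
    by (simp_all add: stackneg_def matrix_vector_mult_def sum_negf)
  then show ?thesis
    using stacked unfolding vnorm_inf_le_iff abs_le_iff by metis
qed

lemma solution_difference_le_sig_norm_inf:
  fixes f :: "real^'n \<Rightarrow> real^'n" and H :: "real^'n^'m" and B :: "real^'w^'n"
  assumes f_deriv: "\<And>x. (f has_derivative (\<lambda>h. Df x *v h)) (at x)"
    and intertwined: "\<And>x. \<exists>N\<in>bounded_metzler K (- \<eta> *\<^sub>R what H B). H ** Df x = N ** H"
    and "0 < \<eta>" and sol: "is_solution f B w1 x1" "is_solution f B w2 x2"
    and input: "in_Linf (\<lambda>t. w1 t - w2 t)" "sig_norm_inf (\<lambda>t. w1 t - w2 t) \<le> \<gamma>"
    and "0 \<le> t"
  shows "\<forall>j. (H *v (x1 t - x2 t)) $ j \<le> \<gamma> / \<eta>"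
proof
  have bound: "vnorm_inf (w1 s - w2 s) \<le> \<gamma>" if "0 \<le> s" for s
    using vnorm_inf_le_sig_norm_inf[OF input(1) that] input(2) by simp
  show "(H *v (x1 t - x2 t)) $ j \<le> \<gamma> / \<eta>" for j
  proof (rule solution_difference_component_le[OF f_deriv intertwined sol])
    show "vnorm_inf (w1 s - w2 s) \<le> \<eta> * (\<gamma> / \<eta>)" if "0 \<le> s" for s
      using bound[OF that] \<open>0 < \<eta>\<close> by simp
    show "0 \<le> \<gamma> / \<eta>"
      using order_trans[OF vnorm_inf_nonneg bound[of 0]] \<open>0 < \<eta>\<close> by simp
  qed fact
qed

theorem theorem2:
  fixes f :: "real^'n \<Rightarrow> real^'n"
    and Df :: "real^'n \<Rightarrow> real^'n^'n"
    and B :: "real^'w^'n" and C :: "real^'n^'z"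
    and A :: "'k::finite \<Rightarrow> real^'n^'n"
    and M :: "'k \<Rightarrow> real^'m^'m"
    and H :: "real^'n^'m" and P :: "real^'m^('z + 'z)"
    and \<eta>z \<eta>w :: real
  assumes f_deriv: "\<And>x. (f has_derivative (\<lambda>h. Df x *v h)) (at x)"
    and Df_cont: "continuous_on UNIV Df"
    and jac_conv: "\<And>x. Df x \<in> convex hull (range A)"
    and eta_w_pos: "\<eta>w > 0"
    and M_metzler: "\<And>i a b. a \<noteq> b \<Longrightarrow> M i $ a $ b \<ge> 0"
    and HA: "\<And>i. H ** A i = M i ** H"
    and M_one: "\<And>i. - \<eta>w *\<^sub>R what H B = M i *v vec 1"
    and P_nonneg: "\<And>a b. P $ a $ b \<ge> 0"
    and CPH: "stackneg C = P ** H"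
    and P_one: "\<eta>z *\<^sub>R vec 1 = P *v vec 1"
    and H_compact: "compact (polyH H)"
  shows
    "(\<forall>w1 w2 x1 x2. is_solution f B w1 x1 \<and> is_solution f B w2 x2 \<and>
         in_Linf (\<lambda>t. w1 t - w2 t) \<and> sig_norm_inf (\<lambda>t. w1 t - w2 t) \<le> 1 \<longrightarrow>
         (\<forall>t\<ge>0. x1 t - x2 t \<in> (\<lambda>x. x /\<^sub>R \<eta>w) ` polyH H))
   \<and> (\<forall>w1 w2 x1 x2 t. is_solution f B w1 x1 \<and> is_solution f B w2 x2 \<and> t \<ge> 0 \<and>
         x1 t - x2 t \<in> (\<lambda>x. x /\<^sub>R \<eta>w) ` polyH H \<longrightarrow>
         vnorm_inf (C *v x1 t - C *v x2 t) \<le> \<eta>z / \<eta>w)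
   \<and> (\<forall>w1 w2 x1 x2. is_solution f B w1 x1 \<and> is_solution f B w2 x2 \<and>
         in_Linf (\<lambda>t. w1 t - w2 t) \<longrightarrow>
         in_Linf (\<lambda>t. C *v x1 t - C *v x2 t) \<and>
         sig_norm_inf (\<lambda>t. C *v x1 t - C *v x2 t) \<le> \<eta>z / \<eta>w * sig_norm_inf (\<lambda>t. w1 t - w2 t))"
proof -
  define K where "K = Max (range (\<lambda>(i, a, b). \<bar>M i $ a $ b\<bar>))"
  have "M i \<in> bounded_metzler K (- \<eta>w *\<^sub>R what H B)" for i
    using M_metzler M_one unfolding bounded_metzler_def metzler_def K_def
    by (auto intro!: Max_ge rev_image_eqI[of "(i, _, _)"])
  then have intertwined: "\<exists>N\<in>bounded_metzler K (- \<eta>w *\<^sub>R what H B). H ** Df x = N ** H" for x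
    by (rule intertwined_convex_hull[OF convex_bounded_metzler _ HA jac_conv])
  have output_le: "vnorm_inf (C *v a - C *v b) \<le> \<eta>z * \<rho>"
    if "\<forall>j. (H *v (a - b)) $ j \<le> \<rho>" for a b \<rho>
    using vnorm_inf_output_le[OF P_nonneg CPH P_one that[rule_format]]
    by (simp add: matrix_vector_mult_diff_distrib)
  note difference_le = solution_difference_le_sig_norm_inf[OF f_deriv intertwined eta_w_pos]
  have gain: "vnorm_inf (C *v x1 t - C *v x2 t) \<le> \<eta>z / \<eta>w * sig_norm_inf (\<lambda>t. w1 t - w2 t)"
    if "is_solution f B w1 x1" "is_solution f B w2 x2" "in_Linf (\<lambda>t. w1 t - w2 t)" "0 \<le> t"
    for w1 x1 w2 x2 t
    using output_le[OF difference_le[OF that(1-3) order.refl that(4)]] by simp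
  show ?thesis
  proof (intro conjI allI impI; elim conjE)
    fix w1 w2 x1 x2 and t :: real
    assume "is_solution f B w1 x1" "is_solution f B w2 x2" "in_Linf (\<lambda>t. w1 t - w2 t)"
      "sig_norm_inf (\<lambda>t. w1 t - w2 t) \<le> 1" "0 \<le> t"
    from difference_le[OF this] show "x1 t - x2 t \<in> (\<lambda>x. x /\<^sub>R \<eta>w) ` polyH H"
      by (simp add: mem_scaled_polyH_iff[OF eta_w_pos])
  next
    fix w1 w2 x1 x2 and t :: real
    assume "x1 t - x2 t \<in> (\<lambda>x. x /\<^sub>R \<eta>w) ` polyH H"
    then have "\<forall>j. (H *v (x1 t - x2 t)) $ j \<le> 1 / \<eta>w"
      by (simp add: mem_scaled_polyH_iff[OF eta_w_pos])
    from output_le[OF this] show "vnorm_inf (C *v x1 t - C *v x2 t) \<le> \<eta>z / \<eta>w"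
      by simp
  next
    fix w1 w2 x1 x2
    assume "is_solution f B w1 x1" "is_solution f B w2 x2" "in_Linf (\<lambda>t. w1 t - w2 t)"
    from gain[OF this] show "in_Linf (\<lambda>t. C *v x1 t - C *v x2 t)"
      by (rule sig_norm_inf_leI)
  next
    fix w1 w2 x1 x2
    assume "is_solution f B w1 x1" "is_solution f B w2 x2" "in_Linf (\<lambda>t. w1 t - w2 t)"
    from gain[OF this] show "sig_norm_inf (\<lambda>t. C *v x1 t - C *v x2 t)
        \<le> \<eta>z / \<eta>w * sig_norm_inf (\<lambda>t. w1 t - w2 t)"
      by (rule sig_norm_inf_leI)
  qed
qed

end
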